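(* For any feasible instance of $1|r_j;\mathrm{pmtn}|E$ with wake-up cost $L$, there is an optimal schedule $S$ (one minimizing $E$) with the following property: for every small gap $[u,t)$ of $S$ and every job $j$, if $C_j(S)\ge t$ then $r_j\ge t$.
   Context: Time is discrete (slots $[t,t+1)$). There are $n$ jobs, job $j$ with integer processing time $p_j\ge1$, release time $r_j$, deadline $d_j$; a feasible (preemptive) schedule assigns to each slot at most one job so that every job $j$ receives exactly $p_j$ slots in $[r_j,d_j)$. $C_j(S)$ is the completion time of job $j$. Blocks are maximal busy intervals; a gap is a maximal finite idle interval (between two blocks). If the blocks of $S$ are $[u_1,t_1),\dots,[u_q,t_q)$ in order, $E(S)=\sum_{i=2}^q\min\{u_i-t_{i-1},L\}$. A gap is small if its length is at most $L$ and large otherwise. *)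

theory Defs
  imports Complex_Main
begin

text \<open>Time slots are natural numbers; slot t is the interval [t,t+1).
  Jobs are indexed by 0..<n. A schedule assigns to each slot at most one job
  (None = idle).\<close>

type_synonym schedule = "nat \<Rightarrow> nat option"

definition feasible ::
  "nat \<Rightarrow> (nat \<Rightarrow> nat) \<Rightarrow> (nat \<Rightarrow> nat) \<Rightarrow> (nat \<Rightarrow> nat) \<Rightarrow> schedule \<Rightarrow> bool" where
  "feasible n p r d S \<longleftrightarrow>
     (\<forall>t j. S t = Some j \<longrightarrow> j < n) \<and>
     (\<forall>j<n. finite {t. S t = Some j} \<and> card {t. S t = Some j} = p j \<and>
            (\<forall>t. S t = Some j \<longrightarrow> r j \<le> t \<and> t < d j))"

definition busy :: "schedule \<Rightarrow> nat \<Rightarrow> bool" where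
  "busy S t \<longleftrightarrow> S t \<noteq> None"

definition is_gap :: "schedule \<Rightarrow> nat \<Rightarrow> nat \<Rightarrow> bool" where
  "is_gap S u t \<longleftrightarrow> 0 < u \<and> u < t \<and> busy S (u - 1) \<and> busy S t \<and>
     (\<forall>s. u \<le> s \<and> s < t \<longrightarrow> \<not> busy S s)"

definition energy :: "real \<Rightarrow> schedule \<Rightarrow> real" where
  "energy L S = (\<Sum>(u,t)\<in>{(u,t). is_gap S u t}. min (real (t - u)) L)"

definition completion :: "schedule \<Rightarrow> nat \<Rightarrow> nat" where
  "completion S j = Max {t. S t = Some j} + 1"

definition optimal ::
  "nat \<Rightarrow> (nat \<Rightarrow> nat) \<Rightarrow> (nat \<Rightarrow> nat) \<Rightarrow> (nat \<Rightarrow> nat) \<Rightarrow> real \<Rightarrow> schedule \<Rightarrow> bool" where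
  "optimal n p r d L S \<longleftrightarrow> feasible n p r d S \<and>
     (\<forall>S'. feasible n p r d S' \<longrightarrow> energy L S \<le> energy L S')"

end

theory Submission
  imports Defs
begin

text \<open>Among all optimal schedules take one minimising the sum of its busy time slots.
  Suppose some job \<open>j\<close> with \<open>r\<^sub>j < t\<close> still runs at or after the end \<open>t\<close> of a small
  gap \<open>[u,t)\<close>. Moving the last unit of \<open>j\<close> into slot \<open>t - 1\<close> keeps the schedule feasible.
  Filling the last slot of a small gap lowers \<open>E\<close> by exactly 1, while idling one slot raises
  \<open>E\<close> by at most 1 (the gap it creates costs at most the gaps it merges plus 1).
  So the new schedule is again optimal but has a smaller sum of busy slots, a contradiction.\<close>

definition gaps :: "schedule \<Rightarrow> (nat \<times> nat) set" where
  "gaps S = {(u,t). is_gap S u t}"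

definition gap_cost :: "real \<Rightarrow> nat \<times> nat \<Rightarrow> real" where
  "gap_cost L = (\<lambda>(u,t). min (real (t - u)) L)"

lemma energy_eq_sum_gaps: "energy L S = sum (gap_cost L) (gaps S)"
  unfolding energy_def gaps_def gap_cost_def by simp

lemma gap_cost_nonneg: "L \<ge> 0 \<Longrightarrow> gap_cost L g \<ge> 0"
  by (cases g) (simp add: gap_cost_def)

lemma gap_cost_split:
  assumes "L \<ge> 0" "a \<le> s" "s < b"
  shows "gap_cost L (a,b) \<le> gap_cost L (a,s) + 1 + gap_cost L (s+1,b)"
  using assms by (simp add: gap_cost_def min_def of_nat_diff)

lemma finite_gaps:
  assumes "finite {x. busy S x}"
  shows "finite (gaps S)"
proof -
  have "gaps S \<subseteq> (\<lambda>(t,u). (u,t)) ` (SIGMA t:{x. busy S x}. {..<t})"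
    unfolding gaps_def is_gap_def by (auto simp: image_iff)
  then show ?thesis
    using assms by (meson finite_SigmaI finite_imageI finite_lessThan finite_subset)
qed

lemma is_gap_unique:
  assumes "is_gap S a b" "is_gap S a' b'" "a \<le> x" "x < b" "a' \<le> x" "x < b'"
  shows "a = a' \<and> b = b'"
proof -
  have "\<not> a < a'"
  proof
    assume "a < a'"
    then have "a \<le> a' - 1" "a' - 1 < b" using assms(4,5) by auto
    then have "\<not> busy S (a' - 1)" using assms(1) unfolding is_gap_def by blast
    then show False using assms(2) unfolding is_gap_def by blast
  qed
  moreover have "\<not> a' < a"
  proof
    assume "a' < a"
    then have "a' \<le> a - 1" "a - 1 < b'" using assms(3,6) by auto
    then have "\<not> busy S (a - 1)" using assms(2) unfolding is_gap_def by blast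
    then show False using assms(1) unfolding is_gap_def by blast
  qed
  moreover have "\<not> b < b'" "\<not> b' < b" using assms unfolding is_gap_def by force+
  ultimately show ?thesis by auto
qed

lemma is_gap_fill_last_iff:
  assumes g: "is_gap S u t"
  shows "is_gap (S(t - 1 := Some j)) a b \<longleftrightarrow>
           (is_gap S a b \<and> (a, b) \<noteq> (u, t)) \<or> (u < t - 1 \<and> a = u \<and> b = t - 1)"
    (is "?new \<longleftrightarrow> ?old \<or> ?shrunk")
proof
  have idle: "\<not> busy S (t - 1)" and busy_t: "busy S t" and ut: "0 < u" "u < t"
    using g unfolding is_gap_def by auto
  assume new: ?new
  then have "\<not> (a \<le> t - 1 \<and> t - 1 < b)"
    unfolding is_gap_def busy_def by auto
  have "a \<noteq> t"
  proof
    assume "a = t"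
    then have "(S(t - 1 := Some j)) t = None" using new unfolding is_gap_def busy_def by blast
    then show False using busy_t ut unfolding busy_def by (auto split: if_splits)
  qed
  show "?old \<or> ?shrunk"
  proof (cases "b = t - 1")
    case True
    have "\<not> busy S s" if "a \<le> s" "s < t" for s
      using that new idle True by (cases "s = t - 1") (auto simp: is_gap_def busy_def)
    then have "is_gap S a t"
      using new busy_t True unfolding is_gap_def busy_def by (auto split: if_splits)
    then show ?thesis
      using True new is_gap_unique[OF g, of a t "t - 1"] ut unfolding is_gap_def by auto
  next
    case False
    then have "is_gap S a b"
      using new idle ut \<open>a \<noteq> t\<close> \<open>\<not> (a \<le> t - 1 \<and> t - 1 < b)\<close>
      unfolding is_gap_def busy_def by (auto split: if_splits)
    then show ?thesis using \<open>\<not> (a \<le> t - 1 \<and> t - 1 < b)\<close> ut by auto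
  qed
next
  assume "?old \<or> ?shrunk"
  then show ?new
  proof
    assume old: ?old
    have "u \<le> t - 1" "t - 1 < t" using g unfolding is_gap_def by auto
    then have "\<not> (a \<le> t - 1 \<and> t - 1 < b)"
      using old g is_gap_unique[of S a b u t "t - 1"] by auto
    moreover have "a \<noteq> t" "b \<noteq> t - 1"
      using old g unfolding is_gap_def by auto
    ultimately show ?new
      using old g unfolding is_gap_def busy_def by auto
  next
    assume ?shrunk
    then show ?new using g unfolding is_gap_def busy_def by auto
  qed
qed

lemma gaps_fill_last:
  assumes "is_gap S u t"
  shows "gaps (S(t - 1 := Some j)) =
           (gaps S - {(u, t)}) \<union> (if u < t - 1 then {(u, t - 1)} else {})"
  using is_gap_fill_last_iff[OF assms] unfolding gaps_def by auto

lemma energy_fill_small_gap: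
  assumes g: "is_gap S u t" and small: "real (t - u) \<le> L" and fin: "finite {x. busy S x}"
  shows "energy L (S(t - 1 := Some j)) = energy L S - 1"
proof -
  let ?G = "gaps S - {(u, t)}"
  have "(u, t) \<in> gaps S" using g by (simp add: gaps_def)
  then have old: "energy L S = real (t - u) + sum (gap_cost L) ?G"
    using finite_gaps[OF fin] small by (simp add: energy_eq_sum_gaps sum.remove gap_cost_def)
  have ut: "u < t" and idle: "\<not> busy S (t - 1)" using g unfolding is_gap_def by auto
  show ?thesis
  proof (cases "u < t - 1")
    case True
    have "(u, t - 1) \<notin> ?G" using idle by (simp add: gaps_def is_gap_def)
    then have "energy L (S(t - 1 := Some j)) = gap_cost L (u, t - 1) + sum (gap_cost L) ?G"
      using gaps_fill_last[OF g] True finite_gaps[OF fin] by (simp add: energy_eq_sum_gaps)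
    also have "gap_cost L (u, t - 1) = real (t - u) - 1"
      using True small by (simp add: gap_cost_def of_nat_diff)
    finally show ?thesis using old by (simp add: fun_upd_def)
  next
    case False
    then have "t - u = 1" using ut by simp
    then show ?thesis using old gaps_fill_last[OF g] False by (simp add: energy_eq_sum_gaps)
  qed
qed

lemma is_gap_idle_slot:
  assumes bs: "busy S s" and g: "is_gap (S(s := None)) a b"
  shows "is_gap S a b \<or>
           (a \<le> s \<and> s < b \<and> (a < s \<longrightarrow> is_gap S a s) \<and> (s + 1 < b \<longrightarrow> is_gap S (s + 1) b))"
proof -
  have ends: "a - 1 \<noteq> s" "b \<noteq> s" using g unfolding is_gap_def busy_def by auto
  show ?thesis
  proof (cases "a \<le> s \<and> s < b")
    case True
    then show ?thesis
      using bs g ends unfolding is_gap_def busy_def by (intro disjI2) (fastforce split: if_splits)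
  next
    case False
    then show ?thesis using g ends unfolding is_gap_def busy_def by auto
  qed
qed

lemma energy_idle_slot_le:
  assumes bs: "busy S s" and fin: "finite {x. busy S x}" and L0: "L \<ge> 0"
  shows "energy L (S(s := None)) \<le> energy L S + 1"
proof -
  let ?G = "gaps S" and ?G' = "gaps (S(s := None))"
  have finG: "finite ?G" using finite_gaps[OF fin] .
  have nonneg: "\<And>g. gap_cost L g \<ge> 0" using gap_cost_nonneg[OF L0] .
  show ?thesis
  proof (cases "?G' \<subseteq> ?G")
    case True
    then have "sum (gap_cost L) ?G' \<le> sum (gap_cost L) ?G"
      using finG nonneg by (intro sum_mono2) auto
    then show ?thesis by (simp add: energy_eq_sum_gaps)
  next
    case False
    then obtain a b where ab: "is_gap (S(s := None)) a b" "\<not> is_gap S a b"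
      by (auto simp: gaps_def)
    then have ins: "a \<le> s" "s < b"
      and pieces: "a < s \<Longrightarrow> is_gap S a s" "s + 1 < b \<Longrightarrow> is_gap S (s + 1) b"
      using is_gap_idle_slot[OF bs] by blast+
    define X where
      "X = (if a < s then {(a, s)} else {}) \<union> (if s + 1 < b then {(s + 1, b)} else {})"
    have XG: "X \<subseteq> ?G" using pieces by (auto simp: X_def gaps_def)
    have sumX: "sum (gap_cost L) X = gap_cost L (a, s) + gap_cost L (s + 1, b)"
      using L0 ins by (auto simp: X_def gap_cost_def)
    have "?G' \<subseteq> insert (a, b) (?G - X)"
    proof
      fix g assume g: "g \<in> ?G'"
      obtain a' b' where g_eq: "g = (a', b')" by (cases g)
      have "(a', s) \<notin> ?G'" "(s + 1, b') \<notin> ?G'"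
        by (auto simp: gaps_def is_gap_def busy_def)
      moreover have "is_gap S a' b' \<or> a' = a \<and> b' = b"
        using is_gap_idle_slot[OF bs] is_gap_unique[OF ab(1), of a' b' s] ins g g_eq
        by (auto simp: gaps_def)
      ultimately show "g \<in> insert (a, b) (?G - X)"
        using g g_eq by (auto simp: X_def gaps_def)
    qed
    then have "sum (gap_cost L) ?G' \<le> sum (gap_cost L) (insert (a, b) (?G - X))"
      using finG nonneg by (intro sum_mono2) auto
    also have "\<dots> = gap_cost L (a, b) + sum (gap_cost L) (?G - X)"
      using finG ab(2) by (simp add: gaps_def)
    also have "\<dots> \<le> sum (gap_cost L) X + 1 + sum (gap_cost L) (?G - X)"
      using gap_cost_split[OF L0 ins] sumX by simp
    also have "\<dots> = sum (gap_cost L) ?G + 1"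
      using sum.subset_diff[OF XG finG, of "gap_cost L"] by simp
    finally show ?thesis by (simp add: energy_eq_sum_gaps)
  qed
qed

lemma finite_busy_if_feasible:
  assumes "feasible n p r d S"
  shows "finite {t. busy S t}"
proof -
  have "{t. busy S t} = (\<Union>j<n. {t. S t = Some j})"
    using assms unfolding feasible_def busy_def by auto
  then show ?thesis using assms unfolding feasible_def by auto
qed

lemma finite_feasible: "finite {S. feasible n p r d S}"
proof -
  define D where "D = Max (insert 0 (d ` {..<n}))"
  let ?Fun = "{f. \<forall>x. (x \<in> {..<D} \<longrightarrow> f x \<in> insert None (Some ` {..<n})) \<and>
                        (x \<notin> {..<D} \<longrightarrow> f x = None)}"
  have dD: "d j \<le> D" if "j < n" for j using that unfolding D_def by auto
  have "S \<in> ?Fun" if feas: "feasible n p r d S" for S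
  proof -
    have bound: "x < D \<and> j < n" if "S x = Some j" for x j
      using feas that dD[of j] unfolding feasible_def by fastforce
    have "S x \<in> insert None (Some ` {..<n}) \<and> (\<not> x < D \<longrightarrow> S x = None)" for x
      using bound[of x] by (cases "S x") auto
    then show ?thesis by simp
  qed
  then have "{S. feasible n p r d S} \<subseteq> ?Fun" by blast
  moreover have "finite ?Fun" by (rule finite_set_of_finite_funs) auto
  ultimately show ?thesis by (rule finite_subset)
qed

lemma completion_last_slot:
  assumes "feasible n p r d S" "j < n" "p j \<ge> 1"
  shows "S (completion S j - 1) = Some j"
proof -
  have fin: "finite {t. S t = Some j}" and "card {t. S t = Some j} = p j"
    using assms unfolding feasible_def by auto
  then have "{t. S t = Some j} \<noteq> {}" using assms(3) by (intro notI) simp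
  with fin have "Max {t. S t = Some j} \<in> {t. S t = Some j}" by (rule Max_in)
  then show ?thesis unfolding completion_def by simp
qed

lemma feasible_move_unit:
  assumes feas: "feasible n p r d S" and Ss: "S s = Some j" and Sx: "S x = None"
    and window: "r j \<le> x" "x < d j"
  shows "feasible n p r d (S(x := Some j, s := None))"
proof -
  let ?S' = "S(x := Some j, s := None)"
  have feasS: "k < n \<and> r k \<le> t \<and> t < d k" if "S t = Some k" for t k
    using feas that unfolding feasible_def by blast
  have slotsS: "finite {t. S t = Some k} \<and> card {t. S t = Some k} = p k" if "k < n" for k
    using feas that unfolding feasible_def by blast
  have j: "j < n" using feasS Ss by blast
  have "x \<noteq> s" using Ss Sx by auto
  then have slots_j: "{t. ?S' t = Some j} = insert x ({t. S t = Some j} - {s})"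
    by auto
  have slots_other: "{t. ?S' t = Some k} = {t. S t = Some k}" if "k \<noteq> j" for k
    using that Ss Sx by auto
  have origin: "t = x \<and> k = j \<or> S t = Some k" if "?S' t = Some k" for t k
    using that by (auto split: if_splits)
  have fin_j: "finite {t. ?S' t = Some j}" using slotsS[OF j] unfolding slots_j by simp
  have "p j > 0" using slotsS[OF j] Ss card_gt_0_iff by fastforce
  then have card_j: "card {t. ?S' t = Some j} = p j"
    using slotsS[OF j] Ss Sx unfolding slots_j by (simp add: card_Diff_singleton)
  have range': "k < n \<and> r k \<le> t \<and> t < d k" if "?S' t = Some k" for t k
    using origin[OF that] feasS window j by blast
  have slots': "finite {t. ?S' t = Some k} \<and> card {t. ?S' t = Some k} = p k" if "k < n" for k
  proof (cases "k = j")
    case True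
    then show ?thesis using fin_j card_j by simp
  next
    case False
    then show ?thesis using slots_other[OF False] slotsS[OF that] by simp
  qed
  show ?thesis unfolding feasible_def using range' slots' by blast
qed

lemma energy_move_into_small_gap_le:
  assumes g: "is_gap S u t" and small: "real (t - u) \<le> L" and fin: "finite {x. busy S x}"
    and bs: "busy S s" and L0: "L \<ge> 0"
  shows "energy L (S(t - 1 := Some j, s := None)) \<le> energy L S"
proof -
  let ?S1 = "S(t - 1 := Some j)"
  have "{x. busy ?S1 x} \<subseteq> insert (t - 1) {x. busy S x}" by (auto simp: busy_def)
  then have fin1: "finite {x. busy ?S1 x}" using fin by (simp add: finite_subset)
  have "busy ?S1 s" using bs by (simp add: busy_def)
  then have "energy L (?S1(s := None)) \<le> energy L ?S1 + 1"
    using energy_idle_slot_le fin1 L0 by blast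
  also have "energy L ?S1 = energy L S - 1" by (rule energy_fill_small_gap[OF g small fin])
  finally show ?thesis by linarith
qed

lemma exists_optimal:
  assumes "\<exists>S. feasible n p r d S"
  shows "\<exists>S. optimal n p r d L S"
proof -
  obtain S where "is_arg_min (energy L) (\<lambda>S. S \<in> {S. feasible n p r d S}) S"
    using ex_is_arg_min_if_finite[OF finite_feasible] assms by blast
  then show ?thesis unfolding optimal_def is_arg_min_linorder by auto
qed

lemma optimal_if_energy_le:
  "optimal n p r d L S \<Longrightarrow> feasible n p r d S' \<Longrightarrow> energy L S' \<le> energy L S
     \<Longrightarrow> optimal n p r d L S'"
  unfolding optimal_def by (meson order_trans)

definition busy_time_sum :: "schedule \<Rightarrow> nat" where
  "busy_time_sum S = \<Sum>{t. busy S t}"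

lemma busy_time_sum_move_earlier:
  assumes fin: "finite {t. busy S t}" and bs: "busy S s" and idle: "\<not> busy S x" and xs: "x < s"
  shows "busy_time_sum (S(x := Some j, s := None)) < busy_time_sum S"
proof -
  let ?B = "{t. busy S t} - {s}"
  have "{t. busy (S(x := Some j, s := None)) t} = insert x ?B"
    using bs idle xs by (auto simp: busy_def)
  then have "busy_time_sum (S(x := Some j, s := None)) = x + \<Sum>?B"
    using fin idle by (simp add: busy_time_sum_def)
  moreover have "busy_time_sum S = s + \<Sum>?B"
    using fin bs by (simp add: busy_time_sum_def sum.remove)
  ultimately show ?thesis using xs by simp
qed

lemma optimal_move_last_unit_into_small_gap:
  assumes opt: "optimal n p r d L S" and L0: "L \<ge> 0"
    and g: "is_gap S u t" and small: "real (t - u) \<le> L"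
    and j: "j < n" "p j \<ge> 1" and late: "completion S j \<ge> t" and early: "r j < t"
  defines "S' \<equiv> S(t - 1 := Some j, completion S j - 1 := None)"
  shows "optimal n p r d L S'" and "busy_time_sum S' < busy_time_sum S"
proof -
  let ?s = "completion S j - 1"
  have feas: "feasible n p r d S" and fin: "finite {t. busy S t}"
    using opt finite_busy_if_feasible unfolding optimal_def by auto
  have Ss: "S ?s = Some j" using completion_last_slot feas j by blast
  have idle: "S (t - 1) = None" using g unfolding is_gap_def busy_def by auto
  have "?s \<noteq> t - 1" using Ss idle by auto
  then have before: "t - 1 < ?s" using late by arith
  moreover have "?s < d j" using feas Ss j unfolding feasible_def by auto
  ultimately have "feasible n p r d S'"
    unfolding S'_def using feasible_move_unit[OF feas Ss idle] early by auto
  moreover have "energy L S' \<le> energy L S"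
    unfolding S'_def using energy_move_into_small_gap_le[OF g small fin _ L0] Ss
    by (simp add: busy_def)
  ultimately show "optimal n p r d L S'" using opt optimal_if_energy_le by blast
  show "busy_time_sum S' < busy_time_sum S"
    unfolding S'_def using busy_time_sum_move_earlier[OF fin _ _ before] Ss idle
    by (simp add: busy_def)
qed

theorem lemma12:
  fixes n :: nat and p r d :: "nat \<Rightarrow> nat" and L :: real
  assumes "L \<ge> 0"
    and "\<forall>j<n. p j \<ge> 1"
    and "\<exists>S. feasible n p r d S"
  shows "\<exists>S. optimal n p r d L S \<and>
           (\<forall>u t j. is_gap S u t \<and> real (t - u) \<le> L \<and> j < n \<and> completion S j \<ge> t
                 \<longrightarrow> r j \<ge> t)"
proof -
  obtain S where opt: "optimal n p r d L S"
    and least: "\<And>S'. optimal n p r d L S' \<Longrightarrow> busy_time_sum S \<le> busy_time_sum S'"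
    using ex_has_least_nat[of "optimal n p r d L"] exists_optimal[OF assms(3)] by metis
  have "r j \<ge> t"
    if "is_gap S u t" "real (t - u) \<le> L" "j < n" "completion S j \<ge> t" for u t j
  proof (rule ccontr)
    assume "\<not> r j \<ge> t"
    then show False
      using optimal_move_last_unit_into_small_gap[OF opt assms(1) that(1,2,3)] assms(2) that(3,4)
        least by (meson leD not_le)
  qed
  then show ?thesis using opt by blast
qed

end
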